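(* Let $0\le\gamma_2\le\gamma_1\le\frac\pi2$ with $\gamma_1+\gamma_2\le\frac\pi2$ and $-1\le x_3\le1$, and let $\rho=\frac12(\Sigma_0+x_3\Sigma_3)$. Define $$x_3^{(3,4)}:=\frac{-\sin\gamma_1\{\pm\sin\gamma_1+[\cos\gamma_1\cos\gamma_2+\sin^2\gamma_1]\sin\gamma_2\}}{1+\cos\gamma_1\{\cos\gamma_2-\sin\gamma_2[\cos\gamma_1\sin\gamma_2+\sin^2\gamma_1\tan\gamma_2]\}},$$ with the upper sign ($+$) giving $x_3^{(3)}$ and the lower sign ($-$) giving $x_3^{(4)}$. Then $-1\le x_3^{(3)}\le 0\le x_3^{(4)}\le 1$ and $$g(\rho)=\begin{cases}\frac{(1-x_3)[1+\cos(\gamma_1+\gamma_2)]}{4}, & -1\le x_3\le x_3^{(3)},\\[1ex] \dfrac{(1-x_3^2)\sin\gamma_1\cos\gamma_2(\cos\gamma_2\sin\gamma_1-x_3\cos\gamma_1\sin\gamma_2)}{-2\big[x_3^2-(\cos\gamma_2\sin\gamma_1-x_3\cos\gamma_1\sin\gamma_2)^2\big]}, & x_3^{(3)}<x_3<x_3^{(4)},\\[1ex] \frac{(1+x_3)[1+\cos(\gamma_1-\gamma_2)]}{4}, & x_3^{(4)}\le x_3\le1.\end{cases}$$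
   Context: On two qubits, let $\sigma_1,\sigma_2,\sigma_3$ denote the Pauli matrices acting on the first qubit and $\tau_1,\tau_2,\tau_3$ those acting on the second qubit (tensor products with the identity understood). For parameters $\gamma_1,\gamma_2$ set $u=\cos\gamma_1\cos\gamma_2$, $v=\sin\gamma_1\sin\gamma_2$, $z_1=\sin\gamma_1\cos\gamma_2$, $z_2=\cos\gamma_1\sin\gamma_2$, and define the operators $\Sigma_0=\frac12(I+u\sigma_3+v\tau_3+z_1\sigma_1\tau_1+z_2\sigma_2\tau_2)$ (a rank-two projector) and $\Sigma_3=\frac12(v\sigma_3+u\tau_3-z_2\sigma_1\tau_1-z_1\sigma_2\tau_2+\sigma_3\tau_3)$. For a two-qubit density matrix $\rho$, $g(\rho):=\max\operatorname{tr}[\rho(\rho_1\otimes\rho_2)]$, the maximum over all pure single-qubit states $\rho_1,\rho_2$. *)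

theory Defs
  imports Complex_Main "Jordan_Normal_Form.Matrix"
begin

definition mtrace :: "complex mat \<Rightarrow> complex" where
  "mtrace A = (\<Sum>i<dim_row A. A $$ (i,i))"

(* Kronecker (tensor) product; the first factor acts on the first qubit *)
definition kron :: "complex mat \<Rightarrow> complex mat \<Rightarrow> complex mat" where
  "kron A B = mat (dim_row A * dim_row B) (dim_col A * dim_col B)
     (\<lambda>(i,j). A $$ (i div dim_row B, j div dim_col B) * B $$ (i mod dim_row B, j mod dim_col B))"

definition pauli1 :: "complex mat" where
  "pauli1 = mat_of_rows_list 2 [[0, 1], [1, 0]]"
definition pauli2 :: "complex mat" where
  "pauli2 = mat_of_rows_list 2 [[0, -\<i>], [\<i>, 0]]"
definition pauli3 :: "complex mat" where
  "pauli3 = mat_of_rows_list 2 [[1, 0], [0, -1]]"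

definition I2 :: "complex mat" where "I2 = 1\<^sub>m 2"
definition I4 :: "complex mat" where "I4 = 1\<^sub>m 4"

(* sigma_k acts on the first qubit, tau_k on the second *)
definition sig :: "complex mat \<Rightarrow> complex mat" where "sig P = kron P I2"
definition tau :: "complex mat \<Rightarrow> complex mat" where "tau P = kron I2 P"

definition Sigma0 :: "real \<Rightarrow> real \<Rightarrow> complex mat" where
  "Sigma0 g1 g2 = (let u = cos g1 * cos g2; v = sin g1 * sin g2;
                       z1 = sin g1 * cos g2; z2 = cos g1 * sin g2 in
     (1/2 :: complex) \<cdot>\<^sub>m (I4 + complex_of_real u \<cdot>\<^sub>m sig pauli3 + complex_of_real v \<cdot>\<^sub>m tau pauli3
        + complex_of_real z1 \<cdot>\<^sub>m (sig pauli1 * tau pauli1)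
        + complex_of_real z2 \<cdot>\<^sub>m (sig pauli2 * tau pauli2)))"

definition Sigma3 :: "real \<Rightarrow> real \<Rightarrow> complex mat" where
  "Sigma3 g1 g2 = (let u = cos g1 * cos g2; v = sin g1 * sin g2;
                       z1 = sin g1 * cos g2; z2 = cos g1 * sin g2 in
     (1/2 :: complex) \<cdot>\<^sub>m (complex_of_real v \<cdot>\<^sub>m sig pauli3 + complex_of_real u \<cdot>\<^sub>m tau pauli3
        + complex_of_real (- z2) \<cdot>\<^sub>m (sig pauli1 * tau pauli1)
        + complex_of_real (- z1) \<cdot>\<^sub>m (sig pauli2 * tau pauli2)
        + sig pauli3 * tau pauli3))"

definition pure_qubit :: "complex mat \<Rightarrow> bool" where
  "pure_qubit P \<longleftrightarrow> (\<exists>\<psi> \<in> carrier_vec 2. (\<Sum>i<2. (cmod (\<psi> $ i))\<^sup>2) = 1 \<and>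
      P = mat 2 2 (\<lambda>(i,j). \<psi> $ i * cnj (\<psi> $ j)))"

(* g(rho) = max tr[rho (rho1 \<otimes> rho2)] over pure rho1, rho2 (the trace is real for Hermitian rho) *)
definition gmax :: "complex mat \<Rightarrow> real" where
  "gmax \<rho> = Sup {Re (mtrace (\<rho> * kron P Q)) | P Q. pure_qubit P \<and> pure_qubit Q}"

(* x_3^{(3)} (s = 1) and x_3^{(4)} (s = -1) *)
definition x3crit :: "real \<Rightarrow> real \<Rightarrow> real \<Rightarrow> real" where
  "x3crit s g1 g2 =
     (- sin g1 * (s * sin g1 + (cos g1 * cos g2 + (sin g1)\<^sup>2) * sin g2)) /
     (1 + cos g1 * (cos g2 - sin g2 * (cos g1 * sin g2 + (sin g1)\<^sup>2 * tan g2)))"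

end

(*
  The state rho = (Sigma0 + x3 Sigma3)/2 is a mixture of two orthogonal entangled pure states.
  With the half angles a = (g1+g2)/2, b = (g1-g2)/2 one has
     rho = p |Phi><Phi| + q |Psi><Psi|,  Phi = cos b |00> + sin b |11>,  Psi = cos a |01> + sin a |10>,
  where p = (1+x3)/2 and q = (1-x3)/2.  Hence for product vectors psi (x) phi
     tr[rho (rho1 (x) rho2)] = p |<Phi|psi phi>|^2 + q |<Psi|psi phi>|^2,
  and by the triangle inequality the supremum is attained on real non-negative amplitudes, so
  g(rho) is the maximum of the real quartic
     F(r,t) = p (cb r0 t0 + sb r1 t1)^2 + q (ca r0 t1 + sa r1 t0)^2
  over unit vectors r, t in R^2.  For fixed t, F is a quadratic form in r, so F <= G on the unit
  circle iff G I - M(t) is positive semidefinite.  Three candidate values of G cover all x3: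
  the "corner" values q ca^2 and p cb^2 (attained at |01> and |00>) and one interior stationary
  value; which one is the maximum is decided by the signs of two polynomials f1, f3 that are
  affine in x3 and change sign exactly at x3crit.  The two corner cases are exchanged by the
  symmetry (a, p) <-> (b, q), so only one of them is proved directly.
*)
theory Submission
  imports Defs
begin

section \<open>Matrix bookkeeping\<close>

lemma sum_lessThan_4: "(\<Sum>i<(4::nat). f i) = f 0 + f 1 + f 2 + (f 3 :: 'a::comm_monoid_add)"
  by (simp add: eval_nat_numeral lessThan_Suc add.assoc add.commute add.left_commute)

lemma sum_atLeast0LessThan_4: "(\<Sum>i\<in>{0..<(4::nat)}. f i) = f 0 + f 1 + f 2 + (f 3 :: 'a::comm_monoid_add)"
  using sum_lessThan_4[of f] by (simp add: atLeast0LessThan)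

lemma sum_lessThan_2: "(\<Sum>i<(2::nat). f i) = f 0 + (f 1 :: 'a::comm_monoid_add)"
  by (simp add: numeral_2_eq_2 lessThan_Suc add.commute)

lemma less_4_cases:
  "(i::nat) < 4 \<Longrightarrow> (i = 0 \<Longrightarrow> P) \<Longrightarrow> (i = 1 \<Longrightarrow> P) \<Longrightarrow> (i = 2 \<Longrightarrow> P) \<Longrightarrow> (i = 3 \<Longrightarrow> P) \<Longrightarrow> P"
  by linarith

lemma kron_dims [simp]:
  "dim_row (kron A B) = dim_row A * dim_row B" "dim_col (kron A B) = dim_col A * dim_col B"
  by (simp_all add: kron_def)

lemma kron_index:
  "i < dim_row A * dim_row B \<Longrightarrow> j < dim_col A * dim_col B \<Longrightarrow>
   kron A B $$ (i,j) = A $$ (i div dim_row B, j div dim_col B) * B $$ (i mod dim_row B, j mod dim_col B)"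
  by (simp add: kron_def)

lemma pauli_dims [simp]:
  "dim_row pauli1 = 2" "dim_col pauli1 = 2" "dim_row pauli2 = 2" "dim_col pauli2 = 2"
  "dim_row pauli3 = 2" "dim_col pauli3 = 2" "dim_row I2 = 2" "dim_col I2 = 2"
  "dim_row I4 = 4" "dim_col I4 = 4"
  by (simp_all add: pauli1_def pauli2_def pauli3_def I2_def I4_def mat_of_rows_list_def)

text \<open>Entries are listed both with \<open>1\<close> and with \<open>Suc 0\<close>, the two normal forms the simplifier produces.\<close>
lemma pauli_entries [simp]:
  "pauli1 $$ (0,0) = 0" "pauli1 $$ (0,1) = 1" "pauli1 $$ (1,0) = 1" "pauli1 $$ (1,1) = 0"
  "pauli2 $$ (0,0) = 0" "pauli2 $$ (0,1) = -\<i>" "pauli2 $$ (1,0) = \<i>" "pauli2 $$ (1,1) = 0"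
  "pauli3 $$ (0,0) = 1" "pauli3 $$ (0,1) = 0" "pauli3 $$ (1,0) = 0" "pauli3 $$ (1,1) = -1"
  "I2 $$ (0,0) = 1" "I2 $$ (0,1) = 0" "I2 $$ (1,0) = 0" "I2 $$ (1,1) = 1"
  "pauli1 $$ (0,Suc 0) = 1" "pauli1 $$ (Suc 0,0) = 1" "pauli1 $$ (Suc 0,Suc 0) = 0"
  "pauli2 $$ (0,Suc 0) = -\<i>" "pauli2 $$ (Suc 0,0) = \<i>" "pauli2 $$ (Suc 0,Suc 0) = 0"
  "pauli3 $$ (0,Suc 0) = 0" "pauli3 $$ (Suc 0,0) = 0" "pauli3 $$ (Suc 0,Suc 0) = -1"
  "I2 $$ (0,Suc 0) = 0" "I2 $$ (Suc 0,0) = 0" "I2 $$ (Suc 0,Suc 0) = 1"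
  by (simp_all add: pauli1_def pauli2_def pauli3_def I2_def mat_of_rows_list_def)

lemma sig_tau_dims [simp]:
  "dim_row (sig P) = dim_row P * 2" "dim_col (sig P) = dim_col P * 2"
  "dim_row (tau P) = 2 * dim_row P" "dim_col (tau P) = 2 * dim_col P"
  by (simp_all add: sig_def tau_def)

lemma sig_times_tau:
  assumes "dim_row P = 2" "dim_col P = 2" "dim_row Q = 2" "dim_col Q = 2"
  shows "sig P * tau Q = kron P Q"
proof (rule eq_matI)
  fix i j assume "i < dim_row (kron P Q)" "j < dim_col (kron P Q)"
  then have "i < 4" "j < 4" using assms by auto
  then show "(sig P * tau Q) $$ (i, j) = kron P Q $$ (i, j)"
    using assms
    apply (simp add: sig_def tau_def kron_index scalar_prod_def sum_atLeast0LessThan_4)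
    apply (erule less_4_cases; erule less_4_cases; simp)
    done
qed (use assms in auto)

section \<open>The state and its matrix\<close>

definition two_qubit_state :: "real \<Rightarrow> real \<Rightarrow> real \<Rightarrow> complex mat" where
  "two_qubit_state g1 g2 x = (1/2 :: complex) \<cdot>\<^sub>m (Sigma0 g1 g2 + complex_of_real x \<cdot>\<^sub>m Sigma3 g1 g2)"

text \<open>The (real) matrix of \<open>\<rho>\<close> in the computational basis \<open>|00>, |01>, |10>, |11>\<close>.\<close>
definition state_table :: "real \<Rightarrow> real \<Rightarrow> real \<Rightarrow> nat \<Rightarrow> nat \<Rightarrow> real" where
  "state_table g1 g2 x i j = (let u = cos g1 * cos g2; v = sin g1 * sin g2;
                                 z1 = sin g1 * cos g2; z2 = cos g1 * sin g2 in
   (if i = 0 \<and> j = 0 then 1 + u + v + x*(v+u+1)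
    else if i = 1 \<and> j = 1 then 1 + u - v + x*(v-u-1)
    else if i = 2 \<and> j = 2 then 1 - u + v + x*(u-v-1)
    else if i = 3 \<and> j = 3 then 1 - u - v + x*(1-u-v)
    else if (i = 0 \<and> j = 3) \<or> (i = 3 \<and> j = 0) then z1 - z2 + x*(z1 - z2)
    else if (i = 1 \<and> j = 2) \<or> (i = 2 \<and> j = 1) then z1 + z2 - x*(z1 + z2)
    else 0) / 4)"

lemma two_qubit_state_dims [simp]:
  "dim_row (two_qubit_state g1 g2 x) = 4" "dim_col (two_qubit_state g1 g2 x) = 4"
  by (simp_all add: two_qubit_state_def Sigma0_def Sigma3_def Let_def)

lemma two_qubit_state_entry:
  assumes "i < 4" "j < 4"
  shows "two_qubit_state g1 g2 x $$ (i,j) = complex_of_real (state_table g1 g2 x i j)"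
proof -
  have pp: "sig P * tau Q = kron P Q" if "P \<in> {pauli1,pauli2,pauli3}" "Q \<in> {pauli1,pauli2,pauli3}" for P Q
    using that by (intro sig_times_tau) auto
  show ?thesis
    using assms
    apply (simp add: two_qubit_state_def Sigma0_def Sigma3_def Let_def pp)
    apply (simp add: sig_def tau_def kron_index I4_def)
    apply (erule less_4_cases; erule less_4_cases; simp add: state_table_def Let_def; simp add: field_simps)
    done
qed

text \<open>Amplitudes of \<open>c|00> + s|11>\<close> and of \<open>c|01> + s|10>\<close> in the computational basis.\<close>
definition phi_amp :: "real \<Rightarrow> real \<Rightarrow> nat \<Rightarrow> real" where
  "phi_amp c s k = (if k = 0 then c else if k = 3 then s else 0)"

definition psi_amp :: "real \<Rightarrow> real \<Rightarrow> nat \<Rightarrow> real" where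
  "psi_amp c s k = (if k = 1 then c else if k = 2 then s else 0)"

lemma state_table_mixture:
  assumes "cos g1 = ca*cb - sa*sb" "sin g1 = sa*cb + ca*sb" "cos g2 = ca*cb + sa*sb" "sin g2 = sa*cb - ca*sb"
    and "ca^2 + sa^2 = 1" "cb^2 + sb^2 = 1" and "i < 4" "j < 4"
  shows "state_table g1 g2 x i j =
    (1+x)/2 * phi_amp cb sb i * phi_amp cb sb j + (1-x)/2 * psi_amp ca sa i * psi_amp ca sa j"
proof -
  define u where "u = cos g1 * cos g2"
  define v where "v = sin g1 * sin g2"
  define z1 where "z1 = sin g1 * cos g2"
  define z2 where "z2 = cos g1 * sin g2"
  have e1: "1+(u+v) = 2*cb^2" and e2: "1-(u+v) = 2*sb^2" and e3: "1+(u-v) = 2*ca^2"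
    and e4: "1-(u-v) = 2*sa^2" and e5: "z1-z2 = 2*cb*sb" and e6: "z1+z2 = 2*ca*sa"
    unfolding u_def v_def z1_def z2_def assms(1-4) using assms(5,6) by Groebner_Basis.algebra+
  have "state_table g1 g2 x i j = (if i = 0 \<and> j = 0 then (1+x)*(1+(u+v))
    else if i = 1 \<and> j = 1 then (1-x)*(1+(u-v))
    else if i = 2 \<and> j = 2 then (1-x)*(1-(u-v))
    else if i = 3 \<and> j = 3 then (1+x)*(1-(u+v))
    else if (i = 0 \<and> j = 3) \<or> (i = 3 \<and> j = 0) then (1+x)*(z1-z2)
    else if (i = 1 \<and> j = 2) \<or> (i = 2 \<and> j = 1) then (1-x)*(z1+z2)
    else 0) / 4"
    unfolding state_table_def Let_def u_def[symmetric] v_def[symmetric] z1_def[symmetric] z2_def[symmetric]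
    by (simp add: algebra_simps)
  then show ?thesis
    unfolding e1 e2 e3 e4 e5 e6 using \<open>i < 4\<close> \<open>j < 4\<close>
    by (elim less_4_cases) (simp_all add: phi_amp_def psi_amp_def power2_eq_square)
qed

section \<open>Expectation values on product states\<close>

definition qubit_proj :: "complex vec \<Rightarrow> complex mat" where
  "qubit_proj \<psi> = mat 2 2 (\<lambda>(i,j). \<psi> $ i * cnj (\<psi> $ j))"

lemma pure_qubit_iff:
  "pure_qubit P \<longleftrightarrow> (\<exists>\<psi> \<in> carrier_vec 2. (cmod (\<psi> $ 0))\<^sup>2 + (cmod (\<psi> $ 1))\<^sup>2 = 1 \<and> P = qubit_proj \<psi>)"
  by (simp add: pure_qubit_def qubit_proj_def sum_lessThan_2)

definition real_qubit :: "real \<Rightarrow> real \<Rightarrow> complex vec" where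
  "real_qubit r0 r1 = vec 2 (\<lambda>i. if i = 0 then complex_of_real r0 else complex_of_real r1)"

lemma real_qubit_facts:
  "real_qubit r0 r1 \<in> carrier_vec 2" "real_qubit r0 r1 $ 0 = of_real r0" "real_qubit r0 r1 $ 1 = of_real r1"
  by (simp_all add: real_qubit_def)

lemma pure_real_qubit: "r0^2 + r1^2 = 1 \<Longrightarrow> pure_qubit (qubit_proj (real_qubit r0 r1))"
  unfolding pure_qubit_iff using real_qubit_facts by (intro bexI[of _ "real_qubit r0 r1"]) auto

lemma trace_times_product_proj:
  assumes "dim_row R = 4" "dim_col R = 4" "\<psi> \<in> carrier_vec 2" "\<phi> \<in> carrier_vec 2"
  shows "mtrace (R * kron (qubit_proj \<psi>) (qubit_proj \<phi>))
    = (\<Sum>i<4. \<Sum>j<4. R $$ (i,j) * ((\<psi> $ (j div 2) * \<phi> $ (j mod 2)) * cnj (\<psi> $ (i div 2) * \<phi> $ (i mod 2))))"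
  using assms
  apply (simp add: mtrace_def qubit_proj_def scalar_prod_def atLeast0LessThan)
  apply (intro sum.cong refl)
  apply (simp add: kron_index)
  done

lemma hermitian_form_rank_two:
  fixes v w :: "'i \<Rightarrow> real" and z :: "'i \<Rightarrow> complex"
  shows "(\<Sum>i\<in>A. \<Sum>j\<in>A. complex_of_real (p * v i * v j + q * w i * w j) * (z j * cnj (z i)))
    = complex_of_real (p * (cmod (\<Sum>j\<in>A. of_real (v j) * z j))\<^sup>2 + q * (cmod (\<Sum>j\<in>A. of_real (w j) * z j))\<^sup>2)"
proof -
  have square: "complex_of_real ((cmod (\<Sum>j\<in>A. of_real (u j) * z j))\<^sup>2)
      = (\<Sum>i\<in>A. \<Sum>j\<in>A. complex_of_real (u i * u j) * (z j * cnj (z i)))" for u :: "'i \<Rightarrow> real"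
    unfolding complex_norm_square cnj_sum sum_product
    by (subst sum.swap) (simp add: mult_ac)
  show ?thesis
    unfolding of_real_add of_real_mult[of p] of_real_mult[of q] square
    by (simp add: sum_distrib_left sum.distrib[symmetric] algebra_simps)
qed


lemma expectation_product_state:
  assumes trig: "cos g1 = ca*cb - sa*sb" "sin g1 = sa*cb + ca*sb" "cos g2 = ca*cb + sa*sb" "sin g2 = sa*cb - ca*sb"
    and pyth: "ca^2 + sa^2 = 1" "cb^2 + sb^2 = 1"
    and vecs: "\<psi> \<in> carrier_vec 2" "\<phi> \<in> carrier_vec 2"
  shows "Re (mtrace (two_qubit_state g1 g2 x * kron (qubit_proj \<psi>) (qubit_proj \<phi>)))
     = (1+x)/2 * (cmod (of_real cb * \<psi>$0 * \<phi>$0 + of_real sb * \<psi>$1 * \<phi>$1))\<^sup>2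
     + (1-x)/2 * (cmod (of_real ca * \<psi>$0 * \<phi>$1 + of_real sa * \<psi>$1 * \<phi>$0))\<^sup>2"
proof -
  define z where "z k = \<psi> $ (k div 2) * \<phi> $ (k mod 2)" for k :: nat
  have "mtrace (two_qubit_state g1 g2 x * kron (qubit_proj \<psi>) (qubit_proj \<phi>))
      = (\<Sum>i<4. \<Sum>j<4. two_qubit_state g1 g2 x $$ (i,j) * (z j * cnj (z i)))"
    unfolding z_def by (rule trace_times_product_proj) (simp_all add: vecs)
  also have "\<dots> = (\<Sum>i<4. \<Sum>j<4. complex_of_real ((1+x)/2 * phi_amp cb sb i * phi_amp cb sb j
                                   + (1-x)/2 * psi_amp ca sa i * psi_amp ca sa j) * (z j * cnj (z i)))"
    by (intro sum.cong refl)
       (simp add: two_qubit_state_entry state_table_mixture[OF trig pyth])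
  also have "\<dots> = complex_of_real ((1+x)/2 * (cmod (\<Sum>j<4. of_real (phi_amp cb sb j) * z j))\<^sup>2
                                 + (1-x)/2 * (cmod (\<Sum>j<4. of_real (psi_amp ca sa j) * z j))\<^sup>2)"
    by (rule hermitian_form_rank_two)
  also have "(\<Sum>j<4. of_real (phi_amp cb sb j) * z j) = of_real cb * \<psi>$0 * \<phi>$0 + of_real sb * \<psi>$1 * \<phi>$1"
    by (simp add: sum_lessThan_4 phi_amp_def z_def mult.assoc)
  also have "(\<Sum>j<4. of_real (psi_amp ca sa j) * z j) = of_real ca * \<psi>$0 * \<phi>$1 + of_real sa * \<psi>$1 * \<phi>$0"
    by (simp add: sum_lessThan_4 psi_amp_def z_def mult.assoc)
  finally show ?thesis
    by (simp only: Re_complex_of_real)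
qed

section \<open>The real optimisation problem\<close>

lemma psd_form_nonneg:
  fixes m11 m12 m22 r0 r1 :: real
  assumes "0 \<le> m11" "0 \<le> m22" "m12^2 \<le> m11*m22"
  shows "0 \<le> m11*r0^2 + 2*m12*r0*r1 + m22*r1^2"
proof (cases "m11 = 0")
  case True
  then have "m12 = 0" using assms by simp
  then show ?thesis using True assms by simp
next
  case False
  then have pos: "m11 > 0" using assms by simp
  have "m11*(m11*r0^2 + 2*m12*r0*r1 + m22*r1^2) = (m11*r0 + m12*r1)^2 + (m11*m22 - m12^2)*r1^2"
    by (simp add: algebra_simps power2_eq_square)
  also have "\<dots> \<ge> 0" using assms by (intro add_nonneg_nonneg mult_nonneg_nonneg) auto
  finally show ?thesis using pos by (simp add: zero_le_mult_iff)
qed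

lemma singular_form_has_unit_zero:
  fixes m11 m12 m22 :: real
  assumes "m11*m22 = m12^2"
  shows "\<exists>r0 r1. r0^2 + r1^2 = 1 \<and> m11*r0^2 + 2*m12*r0*r1 + m22*r1^2 = 0"
proof (cases "m11 = 0 \<and> m12 = 0")
  case True
  then show ?thesis by (intro exI[of _ 1] exI[of _ 0]) simp
next
  case False
  define n where "n = sqrt (m11^2 + m12^2)"
  have pos: "m11^2 + m12^2 > 0" using False by (simp add: sum_power2_gt_zero_iff)
  then have n2: "n^2 = m11^2 + m12^2" and n0: "n > 0" by (simp_all add: n_def)
  have "(-m12/n)^2 + (m11/n)^2 = (m11^2 + m12^2)/n^2"
    by (simp add: power_divide add_divide_distrib add.commute)
  then have "(-m12/n)^2 + (m11/n)^2 = 1" using n2 pos False by simp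
  moreover have "m11*(-m12/n)^2 + 2*m12*(-m12/n)*(m11/n) + m22*(m11/n)^2 = m11*(m11*m22 - m12^2)/n^2"
    using n0 by (simp add: power_divide field_simps power2_eq_square)
  ultimately show ?thesis using assms by (intro exI[of _ "-m12/n"] exI[of _ "m11/n"]) simp
qed

text \<open>The parameters of \<open>p |\<Phi>><\<Phi>| + q |\<Psi>><\<Psi>|\<close> with \<open>\<Phi> = cb|00> + sb|11>\<close>, \<open>\<Psi> = ca|01> + sa|10>\<close>,
  where \<open>ca, sa, cb, sb\<close> are cosines and sines of angles in \<open>[0, \<pi>/4]\<close>.\<close>
locale bell_mixture =
  fixes ca sa cb sb p q :: real
  assumes pyth_a: "ca^2 + sa^2 = 1" and pyth_b: "cb^2 + sb^2 = 1"
    and weights: "p + q = 1" and p_nonneg: "0 \<le> p" and q_nonneg: "0 \<le> q"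
    and ca_pos: "0 < ca" and cb_pos: "0 < cb" and sa_nonneg: "0 \<le> sa" and sb_nonneg: "0 \<le> sb"
    and sa_le_ca: "sa \<le> ca" and sb_le_cb: "sb \<le> cb"
begin

definition F :: "real \<Rightarrow> real \<Rightarrow> real \<Rightarrow> real \<Rightarrow> real" where
  "F r0 r1 t0 t1 = p*(cb*r0*t0 + sb*r1*t1)^2 + q*(ca*r0*t1 + sa*r1*t0)^2"

definition "c2a = ca^2 - sa^2"
definition "s2a = 2*sa*ca"
definition "c2b = cb^2 - sb^2"
definition "s2b = 2*sb*cb"

text \<open>The interior stationary value \<open>mid_num / mid_den\<close> of the objective, and the polynomials
  \<open>f1, f3\<close> whose signs decide which of the three candidate values is the maximum.\<close>
definition "mid_T = p*s2b + q*s2a"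
definition "mid_num = p*q*(s2a + s2b)*mid_T"
definition "mid_den = mid_T^2 - (p - q)^2"
definition "f1 = p*(ca + sa*s2b) - q*ca*c2a"
definition "f3 = q*(cb + sb*s2a) - p*cb*c2b"
definition "h1 = p*(sa + ca*s2b) + q*sa*c2a"
definition "h3 = q*(sb + cb*s2a) + p*sb*c2b"

lemma double_angle_facts: "0 \<le> c2a" "0 \<le> c2b" "0 \<le> s2a" "0 \<le> s2b" "c2a^2 + s2a^2 = 1" "c2b^2 + s2b^2 = 1"
proof -
  show "0 \<le> c2a" unfolding c2a_def using sa_le_ca sa_nonneg by (simp add: power_mono)
  show "0 \<le> c2b" unfolding c2b_def using sb_le_cb sb_nonneg by (simp add: power_mono)
  show "0 \<le> s2a" "0 \<le> s2b" using sa_nonneg ca_pos sb_nonneg cb_pos by (simp_all add: s2a_def s2b_def)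
  show "c2a^2 + s2a^2 = 1" unfolding c2a_def s2a_def using pyth_a by Groebner_Basis.algebra
  show "c2b^2 + s2b^2 = 1" unfolding c2b_def s2b_def using pyth_b by Groebner_Basis.algebra
qed

lemma F_le_of_psd:
  assumes "r0^2 + r1^2 = 1" "t0^2 + t1^2 = 1"
    and "0 \<le> G - p*cb^2*t0^2 - q*ca^2*t1^2" "0 \<le> G - q*sa^2*t0^2 - p*sb^2*t1^2"
    and "(t0*t1*(p*cb*sb + q*ca*sa))^2 \<le> (G - p*cb^2*t0^2 - q*ca^2*t1^2)*(G - q*sa^2*t0^2 - p*sb^2*t1^2)"
  shows "F r0 r1 t0 t1 \<le> G"
proof -
  have "0 \<le> (G - p*cb^2*t0^2 - q*ca^2*t1^2)*r0^2 + 2*(-(t0*t1*(p*cb*sb + q*ca*sa)))*r0*r1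
          + (G - q*sa^2*t0^2 - p*sb^2*t1^2)*r1^2"
    by (rule psd_form_nonneg) (use assms in \<open>simp_all add: power_mult_distrib\<close>)
  also have "\<dots> = G*(r0^2 + r1^2) - F r0 r1 t0 t1"
    by (simp add: F_def algebra_simps power2_eq_square)
  finally show ?thesis using assms(1) by simp
qed

text \<open>Corner \<open>p cb\<^sup>2\<close> (attained at \<open>r = t = (1,0)\<close>, i.e. at \<open>|00>\<close>): it is the maximum when \<open>f3 \<le> 0\<close>.\<close>
lemma q_le_of_f3_nonpos:
  assumes "f3 \<le> 0"
  shows "q \<le> p*c2b"
proof -
  have "q*cb \<le> q*(cb + sb*s2a)"
    using q_nonneg sb_nonneg double_angle_facts(3) by (simp add: mult_left_mono)
  also have "\<dots> \<le> p*cb*c2b" using assms by (simp add: f3_def)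
  finally show ?thesis using cb_pos by (simp add: mult.commute mult_le_cancel_left_pos)
qed

lemma F_le_high_corner:
  assumes "f3 \<le> 0" "r0^2 + r1^2 = 1" "t0^2 + t1^2 = 1"
  shows "F r0 r1 t0 t1 \<le> p*cb^2"
proof (rule F_le_of_psd[OF assms(2,3)])
  have q_le: "q \<le> p*cb^2"
    using q_le_of_f3_nonpos[OF assms(1)] mult_nonneg_nonneg[OF p_nonneg zero_le_power2[of sb]]
    unfolding c2b_def right_diff_distrib by linarith
  have sq_le_1: "ca^2 \<le> 1" "sa^2 \<le> 1" using pyth_a zero_le_power2[of ca] zero_le_power2[of sa] by linarith+
  have h1: "q*ca^2 \<le> p*cb^2" and h2: "q*sa^2 \<le> p*cb^2"
    using q_le mult_left_le[OF sq_le_1(1) q_nonneg] mult_left_le[OF sq_le_1(2) q_nonneg] by linarith+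
  have h3: "p*sb^2 \<le> p*cb^2" using p_nonneg sb_le_cb sb_nonneg by (intro mult_left_mono power_mono) auto
  have e1: "p*cb^2 - p*cb^2*t0^2 - q*ca^2*t1^2 = (p*cb^2 - q*ca^2)*t1^2"
    using assms(3) by Groebner_Basis.algebra
  have e2: "p*cb^2 - q*sa^2*t0^2 - p*sb^2*t1^2 = (p*cb^2 - q*sa^2)*t0^2 + (p*cb^2 - p*sb^2)*t1^2"
    using assms(3) by Groebner_Basis.algebra
  have e3: "(p*cb^2 - p*cb^2*t0^2 - q*ca^2*t1^2)*(p*cb^2 - q*sa^2*t0^2 - p*sb^2*t1^2) - (t0*t1*(p*cb*sb + q*ca*sa))^2
     = t1^2*(t0^2*((p*cb)*(-f3)) + t1^2*(p*cb^2 - q*ca^2)*(p*cb^2 - p*sb^2))"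
    unfolding f3_def s2a_def c2b_def using assms(3) pyth_a pyth_b weights by Groebner_Basis.algebra
  have "0 \<le> t1^2*(t0^2*((p*cb)*(-f3)) + t1^2*(p*cb^2 - q*ca^2)*(p*cb^2 - p*sb^2))"
    using assms(1) p_nonneg cb_pos h1 h3 by (intro mult_nonneg_nonneg add_nonneg_nonneg) auto
  then show "(t0*t1*(p*cb*sb + q*ca*sa))^2
      \<le> (p*cb^2 - p*cb^2*t0^2 - q*ca^2*t1^2)*(p*cb^2 - q*sa^2*t0^2 - p*sb^2*t1^2)"
    using e3 by linarith
  show "0 \<le> p*cb^2 - p*cb^2*t0^2 - q*ca^2*t1^2" unfolding e1 using h1 by simp
  show "0 \<le> p*cb^2 - q*sa^2*t0^2 - p*sb^2*t1^2" unfolding e2 using h2 h3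
    by (intro add_nonneg_nonneg mult_nonneg_nonneg) auto
qed

text \<open>Exchanging the two Bell-type states (\<open>a \<leftrightarrow> b\<close>, \<open>p \<leftrightarrow> q\<close>) and the two amplitudes of the second
  qubit is a symmetry of the problem; it turns the corner \<open>p cb\<^sup>2\<close> into the corner \<open>q ca\<^sup>2\<close>.\<close>
lemma swapped: "bell_mixture cb sb ca sa q p"
  using pyth_a pyth_b weights p_nonneg q_nonneg ca_pos cb_pos sa_nonneg sb_nonneg sa_le_ca sb_le_cb
  by unfold_locales auto

lemma F_le_low_corner:
  assumes "f1 \<le> 0" "r0^2 + r1^2 = 1" "t0^2 + t1^2 = 1"
  shows "F r0 r1 t0 t1 \<le> q*ca^2"
proof -
  interpret sw: bell_mixture cb sb ca sa q p by (rule swapped)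
  have "sw.f3 = f1"
    unfolding sw.f3_def f1_def sw.s2a_def s2b_def sw.c2b_def c2a_def by simp
  then have "sw.F r0 r1 t1 t0 \<le> q*ca^2"
    using sw.F_le_high_corner assms by (simp add: add.commute)
  then show ?thesis by (simp add: sw.F_def F_def add.commute)
qed

text \<open>The candidate value \<open>G = mid_num/mid_den\<close> is characterised by the
  fact that \<open>G - p cb\<^sup>2, G - q ca\<^sup>2, G - p sb\<^sup>2, G - q sa\<^sup>2\<close> are the weighted squares below.\<close>
lemma mid_identities:
  "mid_num - p*cb^2*mid_den = p*f3^2" "mid_num - q*ca^2*mid_den = q*f1^2"
  "mid_num - p*sb^2*mid_den = p*h3^2" "mid_num - q*sa^2*mid_den = q*h1^2"
  "mid_T*mid_den = 2*(p*f3*h3 + q*f1*h1)"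
  unfolding mid_num_def mid_den_def mid_T_def f1_def f3_def h1_def h3_def s2a_def s2b_def c2a_def c2b_def
  using pyth_a pyth_b weights by Groebner_Basis.algebra+

lemma mid_positivity:
  assumes "0 < f1" "0 < f3"
  shows "0 < p" "0 < q" "0 < mid_den"
proof -
  note dbl = double_angle_facts
  show p_pos: "0 < p"
  proof (rule ccontr)
    assume "\<not> 0 < p"
    then have "f1 = - (q*ca*c2a)" unfolding f1_def using p_nonneg by simp
    moreover have "0 \<le> q*ca*c2a" using q_nonneg ca_pos dbl(1) by simp
    ultimately show False using assms by simp
  qed
  show q_pos: "0 < q"
  proof (rule ccontr)
    assume "\<not> 0 < q"
    then have "f3 = - (p*cb*c2b)" unfolding f3_def using q_nonneg by simp
    moreover have "0 \<le> p*cb*c2b" using p_nonneg cb_pos dbl(2) by simp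
    ultimately show False using assms by simp
  qed
  text \<open>\<open>mid_den\<close> factors as \<open>U V\<close>, and \<open>U\<close>, \<open>V\<close> are positive combinations of \<open>f3\<close>, \<open>f1\<close>.\<close>
  define U where "U = q*(1 + s2a) - p*(1 - s2b)"
  define V where "V = p*(1 + s2b) - q*(1 - s2a)"
  have den_UV: "mid_den = U*V" unfolding mid_den_def U_def V_def mid_T_def by Groebner_Basis.algebra
  have "s2a^2 \<le> 1" "s2b^2 \<le> 1" using dbl(5,6) zero_le_power2[of c2a] zero_le_power2[of c2b] by linarith+
  then have s_le_1: "s2a \<le> 1" "s2b \<le> 1" by (simp_all add: abs_square_le_1 abs_le_iff)
  have eU: "cb*c2b*U = (1 - s2b)*f3 + q*(cb - sb)*(s2a + s2b)"
    unfolding U_def f3_def c2b_def s2b_def s2a_def using pyth_a pyth_b by Groebner_Basis.algebra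
  have eV: "ca*c2a*V = (1 - s2a)*f1 + p*(ca - sa)*(s2a + s2b)"
    unfolding V_def f1_def c2a_def s2a_def s2b_def using pyth_a pyth_b by Groebner_Basis.algebra
  have U_pos: "0 < U"
  proof (cases "c2b = 0")
    case True
    then have "s2b = 1" using dbl(4,6) by (simp add: power2_eq_1_iff)
    then show ?thesis using q_pos dbl(3) by (simp add: U_def)
  next
    case False
    have "s2b \<noteq> 1" using False dbl(6) by auto
    then have "0 < c2b" "s2b < 1" using False dbl(2) s_le_1 by auto
    moreover have "0 \<le> q*(cb - sb)*(s2a + s2b)" using q_nonneg sb_le_cb dbl(3,4) by simp
    ultimately have "0 < cb*c2b*U" unfolding eU using assms by (simp add: add_pos_nonneg)
    then show ?thesis using cb_pos \<open>0 < c2b\<close> zero_less_mult_pos[of "cb*c2b" U] by simp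
  qed
  have V_pos: "0 < V"
  proof (cases "c2a = 0")
    case True
    then have "s2a = 1" using dbl(3,5) by (simp add: power2_eq_1_iff)
    then show ?thesis using p_pos dbl(4) by (simp add: V_def)
  next
    case False
    have "s2a \<noteq> 1" using False dbl(5) by auto
    then have "0 < c2a" "s2a < 1" using False dbl(1) s_le_1 by auto
    moreover have "0 \<le> p*(ca - sa)*(s2a + s2b)" using p_nonneg sa_le_ca dbl(3,4) by simp
    ultimately have "0 < ca*c2a*V" unfolding eV using assms by (simp add: add_pos_nonneg)
    then show ?thesis using ca_pos \<open>0 < c2a\<close> zero_less_mult_pos[of "ca*c2a" V] by simp
  qed
  show "0 < mid_den" using den_UV U_pos V_pos by simp
qed

text \<open>The entries and the determinant of \<open>G I - M(t)\<close> for \<open>G = mid_num/mid_den\<close>; the determinant is a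
  perfect square, which vanishes exactly at the optimal \<open>t\<close>.\<close>
lemma mid_psd_entries:
  assumes "0 < f1" "0 < f3" "t0^2 + t1^2 = 1"
  shows "mid_num/mid_den - p*cb^2*t0^2 - q*ca^2*t1^2 = (p*f3^2*t0^2 + q*f1^2*t1^2)/mid_den"
    "mid_num/mid_den - q*sa^2*t0^2 - p*sb^2*t1^2 = (q*h1^2*t0^2 + p*h3^2*t1^2)/mid_den"
    "(mid_num/mid_den - p*cb^2*t0^2 - q*ca^2*t1^2)*(mid_num/mid_den - q*sa^2*t0^2 - p*sb^2*t1^2)
       - (t0*t1*(p*cb*sb + q*ca*sa))^2
      = p*q*(f3*h1*t0^2 - f1*h3*t1^2)^2/mid_den^2"
proof -
  have den: "0 < mid_den" using mid_positivity assms by simp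
  have num: "mid_num = p*cb^2*mid_den + p*f3^2" "mid_num = q*ca^2*mid_den + q*f1^2"
    "mid_num = p*sb^2*mid_den + p*h3^2" "mid_num = q*sa^2*mid_den + q*h1^2"
    using mid_identities(1-4) by linarith+
  have t: "t0^2 = 1 - t1^2" using assms(3) by simp
  have off: "p*cb*sb + q*ca*sa = (p*f3*h3 + q*f1*h1)/mid_den"
    using mid_identities(5) den unfolding mid_T_def s2a_def s2b_def by (simp add: field_simps)
  show e1: "mid_num/mid_den - p*cb^2*t0^2 - q*ca^2*t1^2 = (p*f3^2*t0^2 + q*f1^2*t1^2)/mid_den"
    using den num(1,2) t by (simp add: field_simps) Groebner_Basis.algebra
  show e2: "mid_num/mid_den - q*sa^2*t0^2 - p*sb^2*t1^2 = (q*h1^2*t0^2 + p*h3^2*t1^2)/mid_den"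
    using den num(3,4) t by (simp add: field_simps) Groebner_Basis.algebra
  show "(mid_num/mid_den - p*cb^2*t0^2 - q*ca^2*t1^2)*(mid_num/mid_den - q*sa^2*t0^2 - p*sb^2*t1^2)
       - (t0*t1*(p*cb*sb + q*ca*sa))^2 = p*q*(f3*h1*t0^2 - f1*h3*t1^2)^2/mid_den^2"
    unfolding e1 e2 off using den by (simp add: field_simps) Groebner_Basis.algebra
qed

lemma h_nonneg: "0 \<le> h1" "0 \<le> h3"
  using double_angle_facts p_nonneg q_nonneg sa_nonneg sb_nonneg ca_pos cb_pos unfolding h1_def h3_def
  by simp_all

lemma F_le_mid:
  assumes "0 < f1" "0 < f3" "r0^2 + r1^2 = 1" "t0^2 + t1^2 = 1"
  shows "F r0 r1 t0 t1 \<le> mid_num/mid_den"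
proof (rule F_le_of_psd[OF assms(3,4)])
  have den: "0 < mid_den" using mid_positivity assms by simp
  note m = mid_psd_entries[OF assms(1,2,4)]
  show "0 \<le> mid_num/mid_den - p*cb^2*t0^2 - q*ca^2*t1^2" unfolding m(1) using den p_nonneg q_nonneg by simp
  show "0 \<le> mid_num/mid_den - q*sa^2*t0^2 - p*sb^2*t1^2" unfolding m(2) using den p_nonneg q_nonneg by simp
  have "0 \<le> p*q*(f3*h1*t0^2 - f1*h3*t1^2)^2/mid_den^2" using p_nonneg q_nonneg by simp
  then show "(t0*t1*(p*cb*sb + q*ca*sa))^2
      \<le> (mid_num/mid_den - p*cb^2*t0^2 - q*ca^2*t1^2)*(mid_num/mid_den - q*sa^2*t0^2 - p*sb^2*t1^2)"
    using m(3) by linarith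
qed

text \<open>The interior value is attained: choose \<open>t\<close> making the determinant vanish and \<open>r\<close> in the kernel.\<close>
lemma mid_attained:
  assumes "0 < f1" "0 < f3"
  shows "\<exists>r0 r1 t0 t1. r0^2 + r1^2 = 1 \<and> t0^2 + t1^2 = 1 \<and> F r0 r1 t0 t1 = mid_num/mid_den"
proof -
  have p_pos: "0 < p" and q_pos: "0 < q" using mid_positivity[OF assms] by simp_all
  have "0 < f1*h3 + f3*h1"
  proof (cases "0 < sa")
    case True
    have "0 \<le> p*(ca*s2b)" "0 \<le> q*sa*c2a"
      using double_angle_facts q_nonneg sa_nonneg ca_pos p_nonneg by simp_all
    moreover have "0 < p*sa" using p_pos True by simp
    ultimately have "0 < h1" unfolding h1_def distrib_left by linarith
    then show ?thesis using assms h_nonneg by (simp add: add_nonneg_pos)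
  next
    case False
    text \<open>If both \<open>sa\<close> and \<open>sb\<close> vanished, \<open>f1 = p - q = -f3\<close> could not be positive together with \<open>f3\<close>.\<close>
    have "0 < sb"
    proof (rule ccontr)
      assume "\<not> 0 < sb"
      then have "sa = 0" "sb = 0" using False sa_nonneg sb_nonneg by simp_all
      moreover have "ca = 1" "cb = 1"
        using pyth_a pyth_b ca_pos cb_pos \<open>sa = 0\<close> \<open>sb = 0\<close> by (simp_all add: power2_eq_1_iff)
      ultimately have "f1 + f3 = 0" unfolding f1_def f3_def s2a_def s2b_def c2a_def c2b_def by simp
      then show False using assms by simp
    qed
    have "0 \<le> q*(cb*s2a)" "0 \<le> p*sb*c2b"
      using double_angle_facts p_nonneg sb_nonneg cb_pos q_nonneg by simp_all
    moreover have "0 < q*sb" using q_pos \<open>0 < sb\<close> by simp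
    ultimately have "0 < h3" unfolding h3_def distrib_left by linarith
    then show ?thesis using assms h_nonneg by (simp add: add_pos_nonneg)
  qed
  define s where "s = f1*h3 + f3*h1"
  have s_pos: "0 < s" unfolding s_def by fact
  define t0 where "t0 = sqrt (f1*h3/s)"
  define t1 where "t1 = sqrt (f3*h1/s)"
  have t0_sq: "t0^2 = f1*h3/s" unfolding t0_def using assms h_nonneg s_pos by simp
  have t1_sq: "t1^2 = f3*h1/s" unfolding t1_def using assms h_nonneg s_pos by simp
  have t_unit: "t0^2 + t1^2 = 1"
    unfolding t0_sq t1_sq add_divide_distrib[symmetric] using s_pos by (simp add: s_def)
  define G where "G = mid_num/mid_den"
  define m11 where "m11 = G - p*cb^2*t0^2 - q*ca^2*t1^2"
  define m22 where "m22 = G - q*sa^2*t0^2 - p*sb^2*t1^2"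
  define m12 where "m12 = -(t0*t1*(p*cb*sb + q*ca*sa))"
  have "f3*h1*t0^2 - f1*h3*t1^2 = 0" unfolding t0_sq t1_sq by (simp add: field_simps)
  then have "m11*m22 = m12^2"
    using mid_psd_entries(3)[OF assms t_unit] unfolding m11_def m22_def m12_def G_def
    by (simp add: power_mult_distrib)
  then obtain r0 r1 where r: "r0^2 + r1^2 = 1" "m11*r0^2 + 2*m12*r0*r1 + m22*r1^2 = 0"
    using singular_form_has_unit_zero by blast
  have "m11*r0^2 + 2*m12*r0*r1 + m22*r1^2 = G*(r0^2 + r1^2) - F r0 r1 t0 t1"
    unfolding m11_def m22_def m12_def F_def using t_unit by (simp add: algebra_simps power2_eq_square)
  then have "F r0 r1 t0 t1 = mid_num/mid_den" using r unfolding G_def by simp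
  then show ?thesis using r(1) t_unit by blast
qed

definition "F_max = (if f1 \<le> 0 then q*ca^2 else if 0 < f3 then mid_num/mid_den else p*cb^2)"

lemma F_le_F_max:
  assumes "r0^2 + r1^2 = 1" "t0^2 + t1^2 = 1"
  shows "F r0 r1 t0 t1 \<le> F_max"
  using F_le_low_corner[OF _ assms] F_le_mid[OF _ _ assms] F_le_high_corner[OF _ assms]
  unfolding F_max_def by auto

lemma F_max_attained: "\<exists>r0 r1 t0 t1. r0^2 + r1^2 = 1 \<and> t0^2 + t1^2 = 1 \<and> F r0 r1 t0 t1 = F_max"
proof (cases "f1 \<le> 0")
  case True
  then have "F 1 0 0 1 = F_max" by (simp add: F_def F_max_def)
  then show ?thesis by (intro exI[of _ 1] exI[of _ 0] exI[of _ 0] exI[of _ 1]) simp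
next
  case f1_pos: False
  show ?thesis
  proof (cases "0 < f3")
    case True
    then show ?thesis using f1_pos mid_attained unfolding F_max_def by simp
  next
    case False
    then have "F 1 0 1 0 = F_max" using f1_pos by (simp add: F_def F_max_def)
    then show ?thesis by (intro exI[of _ 1] exI[of _ 0] exI[of _ 1] exI[of _ 0]) simp
  qed
qed


definition "low_num = ca*c2a - ca - sa*s2b"
definition "low_den = ca*c2a + ca + sa*s2b"
definition "high_num = cb + sb*s2a - cb*c2b"
definition "high_den = cb + sb*s2a + cb*c2b"
definition "x_low = low_num / low_den"
definition "x_high = high_num / high_den"

lemma threshold_dens_pos: "0 < low_den" "0 < high_den"
proof -
  have "0 \<le> ca*c2a" "0 \<le> sa*s2b" "0 \<le> cb*c2b" "0 \<le> sb*s2a"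
    using double_angle_facts ca_pos cb_pos sa_nonneg sb_nonneg by simp_all
  then show "0 < low_den" "0 < high_den" unfolding low_den_def high_den_def using ca_pos cb_pos by linarith+
qed

text \<open>\<open>f1\<close> and \<open>f3\<close> are affine in \<open>p - q\<close>, vanishing exactly at the thresholds.\<close>
lemma threshold_facts:
  shows "-1 \<le> x_low" "x_low \<le> 0" "0 \<le> x_high" "x_high \<le> 1"
    and "f1 \<le> 0 \<longleftrightarrow> p - q \<le> x_low" "0 < f3 \<longleftrightarrow> p - q < x_high"
proof -
  note dbl = double_angle_facts and dens = threshold_dens_pos
  have "c2a^2 \<le> 1" "c2b^2 \<le> 1" using dbl(5,6) zero_le_power2[of s2a] zero_le_power2[of s2b] by linarith+
  then have c_le_1: "c2a \<le> 1" "c2b \<le> 1" by (simp_all add: abs_square_le_1 abs_le_iff)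
  have "ca*c2a \<le> ca" "0 \<le> ca*c2a" "0 \<le> sa*s2b" using ca_pos c_le_1 dbl sa_nonneg by simp_all
  then have "-low_den \<le> low_num" "low_num \<le> 0" by (simp_all add: low_num_def low_den_def)
  then show "-1 \<le> x_low" "x_low \<le> 0"
    using dens unfolding x_low_def by (simp_all add: divide_le_0_iff le_divide_eq)
  have "cb*c2b \<le> cb" "0 \<le> cb*c2b" "0 \<le> sb*s2a" using cb_pos c_le_1 dbl sb_nonneg by simp_all
  then have "0 \<le> high_num" "high_num \<le> high_den" by (simp_all add: high_num_def high_den_def)
  then show "0 \<le> x_high" "x_high \<le> 1"
    using dens unfolding x_high_def by (simp_all add: divide_le_eq)
  have "2*f1 = (p - q)*low_den - low_num"
    unfolding f1_def low_den_def low_num_def using weights by Groebner_Basis.algebra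
  then have "f1 \<le> 0 \<longleftrightarrow> (p - q)*low_den \<le> low_num" by (intro iffI) linarith+
  then show "f1 \<le> 0 \<longleftrightarrow> p - q \<le> x_low"
    using dens unfolding x_low_def by (simp add: le_divide_eq)
  have "2*f3 = high_num - (p - q)*high_den"
    unfolding f3_def high_den_def high_num_def using weights by Groebner_Basis.algebra
  then have "0 < f3 \<longleftrightarrow> (p - q)*high_den < high_num" by (intro iffI) linarith+
  then show "0 < f3 \<longleftrightarrow> p - q < x_high"
    using dens unfolding x_high_def by (simp add: less_divide_eq)
qed

end

section \<open>Back to the angles \<open>\<gamma>\<^sub>1, \<gamma>\<^sub>2\<close>\<close>

text \<open>Half-angle coordinates \<open>a = (\<gamma>\<^sub>1+\<gamma>\<^sub>2)/2 \<in> [0, \<pi>/4]\<close> and \<open>0 \<le> b = (\<gamma>\<^sub>1-\<gamma>\<^sub>2)/2 \<le> a\<close>.\<close>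
lemma half_angle_parametrisation:
  fixes g1 g2 :: real
  assumes "0 \<le> g2" "g2 \<le> g1" "g1 + g2 \<le> pi/2"
  obtains ca sa cb sb where
    "cos g1 = ca*cb - sa*sb" "sin g1 = sa*cb + ca*sb" "cos g2 = ca*cb + sa*sb" "sin g2 = sa*cb - ca*sb"
    "ca^2 + sa^2 = 1" "cb^2 + sb^2 = 1" "0 < ca" "0 < cb" "0 \<le> sa" "0 \<le> sb" "sa \<le> ca" "sb \<le> cb"
proof
  define a b where "a = (g1 + g2)/2" and "b = (g1 - g2)/2"
  have ab: "0 \<le> b" "b \<le> a" "a \<le> pi/4" using assms by (simp_all add: a_def b_def)
  have g: "g1 = a + b" "g2 = a - b" unfolding a_def b_def by (simp_all add: field_simps)
  show "cos g1 = cos a * cos b - sin a * sin b" "sin g1 = sin a * cos b + cos a * sin b"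
    "cos g2 = cos a * cos b + sin a * sin b" "sin g2 = sin a * cos b - cos a * sin b"
    by (simp_all add: g cos_add sin_add cos_diff sin_diff)
  show "(cos a)^2 + (sin a)^2 = 1" "(cos b)^2 + (sin b)^2 = 1" by simp_all
  show "0 < cos a" "0 < cos b" using ab pi_gt_zero by (intro cos_gt_zero_pi; linarith)+
  show "0 \<le> sin a" "0 \<le> sin b" using ab pi_gt_zero by (intro sin_ge_zero; linarith)+
  have "sin t \<le> cos t" if "0 \<le> t" "t \<le> pi/4" for t
  proof -
    have "sin t \<le> sin (pi/2 - t)" using that pi_gt_zero by (subst sin_mono_le_eq) linarith+
    then show ?thesis by (simp add: cos_sin_eq)
  qed
  then show "sin a \<le> cos a" "sin b \<le> cos b" using ab by simp_all
qed

locale half_angle_state = bell_mixture +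
  fixes g1 g2 x :: real
  assumes cos_g1: "cos g1 = ca*cb - sa*sb" and sin_g1: "sin g1 = sa*cb + ca*sb"
    and cos_g2: "cos g2 = ca*cb + sa*sb" and sin_g2: "sin g2 = sa*cb - ca*sb"
    and p_eq: "p = (1+x)/2" and q_eq: "q = (1-x)/2"
begin

lemmas trig = cos_g1 sin_g1 cos_g2 sin_g2

text \<open>Every product state gives at most \<open>F_max\<close>: pass to the moduli of the amplitudes
  (triangle inequality) and use the real bound.\<close>
lemma expectation_le_F_max:
  assumes "pure_qubit P" "pure_qubit Q"
  shows "Re (mtrace (two_qubit_state g1 g2 x * kron P Q)) \<le> F_max"
proof -
  obtain \<psi> \<phi> where vecs: "\<psi> \<in> carrier_vec 2" "\<phi> \<in> carrier_vec 2"
    and unit: "(cmod (\<psi>$0))\<^sup>2 + (cmod (\<psi>$1))\<^sup>2 = 1" "(cmod (\<phi>$0))\<^sup>2 + (cmod (\<phi>$1))\<^sup>2 = 1"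
    and PQ: "P = qubit_proj \<psi>" "Q = qubit_proj \<phi>"
    using assms unfolding pure_qubit_iff by blast
  have tri: "cmod (of_real c * u0 * v0 + of_real s * u1 * v1) \<le> c * cmod u0 * cmod v0 + s * cmod u1 * cmod v1"
    if "0 \<le> c" "0 \<le> s" for c s :: real and u0 u1 v0 v1 :: complex
    using norm_triangle_ineq[of "of_real c * u0 * v0" "of_real s * u1 * v1"] that by (simp add: norm_mult)
  have "Re (mtrace (two_qubit_state g1 g2 x * kron P Q))
      = p * (cmod (of_real cb * \<psi>$0 * \<phi>$0 + of_real sb * \<psi>$1 * \<phi>$1))\<^sup>2
      + q * (cmod (of_real ca * \<psi>$0 * \<phi>$1 + of_real sa * \<psi>$1 * \<phi>$0))\<^sup>2"
    unfolding PQ p_eq q_eq by (rule expectation_product_state[OF trig pyth_a pyth_b vecs])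
  also have "\<dots> \<le> F (cmod (\<psi>$0)) (cmod (\<psi>$1)) (cmod (\<phi>$0)) (cmod (\<phi>$1))"
    unfolding F_def using p_nonneg q_nonneg ca_pos cb_pos sa_nonneg sb_nonneg
    by (intro add_mono mult_left_mono power_mono tri) auto
  also have "\<dots> \<le> F_max" by (rule F_le_F_max[OF unit])
  finally show ?thesis .
qed

lemma F_max_attained_by_product_state:
  obtains P Q where "pure_qubit P" "pure_qubit Q" "Re (mtrace (two_qubit_state g1 g2 x * kron P Q)) = F_max"
proof -
  obtain r0 r1 t0 t1 where unit: "r0^2 + r1^2 = 1" "t0^2 + t1^2 = 1" and val: "F r0 r1 t0 t1 = F_max"
    using F_max_attained by blast
  have "Re (mtrace (two_qubit_state g1 g2 x * kron (qubit_proj (real_qubit r0 r1)) (qubit_proj (real_qubit t0 t1))))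
      = F r0 r1 t0 t1"
    unfolding expectation_product_state[OF trig pyth_a pyth_b real_qubit_facts(1) real_qubit_facts(1)]
    unfolding p_eq[symmetric] q_eq[symmetric]
    by (simp only: real_qubit_facts F_def of_real_mult[symmetric] of_real_add[symmetric] norm_of_real power2_abs)
  then show ?thesis using that pure_real_qubit unit val by metis
qed

lemma gmax_eq_F_max: "gmax (two_qubit_state g1 g2 x) = F_max"
proof -
  obtain P Q where PQ: "pure_qubit P" "pure_qubit Q" "Re (mtrace (two_qubit_state g1 g2 x * kron P Q)) = F_max"
    by (rule F_max_attained_by_product_state)
  have "F_max \<in> {Re (mtrace (two_qubit_state g1 g2 x * kron P Q)) | P Q. pure_qubit P \<and> pure_qubit Q}"
    unfolding mem_Collect_eq using PQ by (intro exI[of _ P] exI[of _ Q]) simp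
  then show ?thesis
    unfolding gmax_def by (rule cSup_eq_maximum) (auto intro: expectation_le_F_max)
qed

lemma x3crit_eq: "x3crit 1 g1 g2 = x_low" "x3crit (-1) g1 g2 = x_high"
proof -
  note dens = threshold_dens_pos
  have cos_g2_pos: "0 < cos g2" unfolding cos_g2 using ca_pos cb_pos sa_nonneg sb_nonneg
    by (simp add: add_pos_nonneg)
  text \<open>Clearing the \<open>tan \<gamma>\<^sub>2\<close> in the common denominator of \<open>x3crit\<close>.\<close>
  define E where "E = cos g2 + cos g1*(cos g2*cos g2 - sin g2*(cos g1*sin g2*cos g2 + (sin g1)^2*sin g2))"
  have E: "E = low_den*high_den/2"
    unfolding E_def trig low_den_def high_den_def c2a_def s2a_def c2b_def s2b_def
    using pyth_a pyth_b by Groebner_Basis.algebra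
  have den: "1 + cos g1 * (cos g2 - sin g2 * (cos g1 * sin g2 + (sin g1)\<^sup>2 * tan g2)) = E / cos g2"
    unfolding E_def tan_def using cos_g2_pos by (simp add: field_simps)
  have "(- sin g1 * (1 * sin g1 + (cos g1 * cos g2 + (sin g1)\<^sup>2) * sin g2)) * cos g2 = low_num * high_den/2"
    unfolding trig high_den_def low_num_def c2a_def s2a_def c2b_def s2b_def
    using pyth_a pyth_b by Groebner_Basis.algebra
  then have "x3crit 1 g1 g2 = (low_num * high_den/2) / E"
    unfolding x3crit_def den by (simp only: divide_divide_eq_right)
  then show "x3crit 1 g1 g2 = x_low"
    unfolding x_low_def E using dens by (simp add: field_simps)
  have "(- sin g1 * ((-1) * sin g1 + (cos g1 * cos g2 + (sin g1)\<^sup>2) * sin g2)) * cos g2 = high_num * low_den/2"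
    unfolding trig low_den_def high_num_def c2a_def s2a_def c2b_def s2b_def
    using pyth_a pyth_b by Groebner_Basis.algebra
  then have "x3crit (-1) g1 g2 = (high_num * low_den/2) / E"
    unfolding x3crit_def den by (simp only: divide_divide_eq_right)
  then show "x3crit (-1) g1 g2 = x_high"
    unfolding x_high_def E using dens by (simp add: field_simps)
qed

lemma weight_difference: "p - q = x"
  using p_eq q_eq by simp

lemma corner_values:
  "(1 - x) * (1 + cos (g1 + g2)) / 4 = q*ca^2" "(1 + x) * (1 + cos (g1 - g2)) / 4 = p*cb^2"
proof -
  have "1 + cos (g1 + g2) = 2*ca^2" "1 + cos (g1 - g2) = 2*cb^2"
    unfolding cos_add cos_diff trig using pyth_a pyth_b by Groebner_Basis.algebra+
  then show "(1 - x) * (1 + cos (g1 + g2)) / 4 = q*ca^2" "(1 + x) * (1 + cos (g1 - g2)) / 4 = p*cb^2"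
    by (simp_all add: p_eq q_eq)
qed

lemma mid_value:
  assumes "0 < f1" "0 < f3"
  shows "((1 - x\<^sup>2) * sin g1 * cos g2 * (cos g2 * sin g1 - x * cos g1 * sin g2)) /
         (-2 * (x\<^sup>2 - (cos g2 * sin g1 - x * cos g1 * sin g2)\<^sup>2)) = mid_num/mid_den"
proof -
  have T: "cos g2 * sin g1 - x * cos g1 * sin g2 = mid_T"
    unfolding trig mid_T_def s2a_def s2b_def using pyth_a pyth_b p_eq q_eq by Groebner_Basis.algebra
  have num: "(1 - x\<^sup>2) * sin g1 * cos g2 * mid_T = 2*mid_num"
    unfolding trig mid_num_def mid_T_def s2a_def s2b_def using pyth_a pyth_b p_eq q_eq by Groebner_Basis.algebra
  have den: "-2 * (x\<^sup>2 - mid_T\<^sup>2) = 2*mid_den"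
    unfolding mid_den_def weight_difference by (simp add: algebra_simps)
  show ?thesis
    unfolding T num den using mid_positivity(3)[OF assms] by simp
qed

lemma regimes: "f1 \<le> 0 \<longleftrightarrow> x \<le> x3crit 1 g1 g2" "0 < f3 \<longleftrightarrow> x < x3crit (-1) g1 g2"
  using threshold_facts(5,6) unfolding x3crit_eq weight_difference by simp_all

lemma F_max_closed_form:
  "F_max = (if x \<le> x3crit 1 g1 g2 then (1 - x) * (1 + cos (g1 + g2)) / 4
       else if x < x3crit (-1) g1 g2 then
         ((1 - x\<^sup>2) * sin g1 * cos g2 * (cos g2 * sin g1 - x * cos g1 * sin g2)) /
         (-2 * (x\<^sup>2 - (cos g2 * sin g1 - x * cos g1 * sin g2)\<^sup>2))
       else (1 + x) * (1 + cos (g1 - g2)) / 4)"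
  unfolding regimes[symmetric] corner_values
proof -
  consider (low) "f1 \<le> 0" | (mid) "0 < f1" "0 < f3" | (high) "\<not> f1 \<le> 0" "\<not> 0 < f3" by linarith
  then show "F_max = (if f1 \<le> 0 then q*ca^2 else if 0 < f3 then
         ((1 - x\<^sup>2) * sin g1 * cos g2 * (cos g2 * sin g1 - x * cos g1 * sin g2)) /
         (-2 * (x\<^sup>2 - (cos g2 * sin g1 - x * cos g1 * sin g2)\<^sup>2))
       else p*cb^2)"
  proof cases
    case low
    then show ?thesis by (simp only: F_max_def if_True)
  next
    case mid
    then have "\<not> f1 \<le> 0" by simp
    then show ?thesis using mid by (simp only: F_max_def if_True if_False mid_value)
  next
    case high
    then show ?thesis by (simp only: F_max_def if_False)
  qed
qed

end

theorem mainTheorem3: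
  fixes g1 g2 x3 :: real
  assumes "0 \<le> g2" "g2 \<le> g1" "g1 \<le> pi/2" "g1 + g2 \<le> pi/2"
    and "-1 \<le> x3" "x3 \<le> 1"
  defines "\<rho> \<equiv> (1/2 :: complex) \<cdot>\<^sub>m (Sigma0 g1 g2 + complex_of_real x3 \<cdot>\<^sub>m Sigma3 g1 g2)"
    and "xa \<equiv> x3crit 1 g1 g2"
    and "xb \<equiv> x3crit (-1) g1 g2"
  shows "-1 \<le> xa \<and> xa \<le> 0 \<and> 0 \<le> xb \<and> xb \<le> 1 \<and>
    gmax \<rho> =
      (if x3 \<le> xa then (1 - x3) * (1 + cos (g1 + g2)) / 4
       else if x3 < xb then
         ((1 - x3\<^sup>2) * sin g1 * cos g2 * (cos g2 * sin g1 - x3 * cos g1 * sin g2)) /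
         (-2 * (x3\<^sup>2 - (cos g2 * sin g1 - x3 * cos g1 * sin g2)\<^sup>2))
       else (1 + x3) * (1 + cos (g1 - g2)) / 4)"
proof -
  obtain ca sa cb sb where params:
    "cos g1 = ca*cb - sa*sb" "sin g1 = sa*cb + ca*sb" "cos g2 = ca*cb + sa*sb" "sin g2 = sa*cb - ca*sb"
    "ca^2 + sa^2 = 1" "cb^2 + sb^2 = 1" "0 < ca" "0 < cb" "0 \<le> sa" "0 \<le> sb" "sa \<le> ca" "sb \<le> cb"
    by (rule half_angle_parametrisation[OF assms(1,2,4)])
  interpret half_angle_state ca sa cb sb "(1+x3)/2" "(1-x3)/2" g1 g2 x3
    using params assms(5,6) by unfold_locales (auto simp flip: add_divide_distrib)
  have bounds: "-1 \<le> xa" "xa \<le> 0" "0 \<le> xb" "xb \<le> 1"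
    using threshold_facts(1-4) unfolding xa_def xb_def x3crit_eq by simp_all
  have "gmax \<rho> = F_max"
    unfolding \<rho>_def two_qubit_state_def[symmetric] by (rule gmax_eq_F_max)
  also have "\<dots> = (if x3 \<le> xa then (1 - x3) * (1 + cos (g1 + g2)) / 4
       else if x3 < xb then
         ((1 - x3\<^sup>2) * sin g1 * cos g2 * (cos g2 * sin g1 - x3 * cos g1 * sin g2)) /
         (-2 * (x3\<^sup>2 - (cos g2 * sin g1 - x3 * cos g1 * sin g2)\<^sup>2))
       else (1 + x3) * (1 + cos (g1 - g2)) / 4)"
    unfolding xa_def xb_def by (rule F_max_closed_form)
  finally show ?thesis using bounds by (simp only: simp_thms)
qed

end
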